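(* Let $X$ be a complex Banach space, $k,m\in\mathbb{N}$, $n=km$, and let $P:\mathbb{C}^n\to X$, $P(z)=\sum_{|A|=m}x_Az_A$, be an $m$-homogeneous tetrahedral polynomial. Let $\xi=(\xi_1,\ldots,\xi_n)$ be a vector of independent symmetric random variables and $\xi^{(1)},\ldots,\xi^{(m)}$ iid copies of $\xi$. Then for every $1\le p<\infty$, \[ \frac{1}{|\Pi_{k,m}|}\sum_{\pi\in\Pi_{k,m}}\big(\mathbb{E}\|L_\pi(\xi^{(1)},\ldots,\xi^{(m)})\|^p\big)^{1/p}\le\big(\mathbb{E}\|P(\xi)\|^p\big)^{1/p}\le\frac{e^m}{|\Pi_{k,m}|}\sum_{\pi\in\Pi_{k,m}}\big(\mathbb{E}\|L_\pi(\xi^{(1)},\ldots,\xi^{(m)})\|^p\big)^{1/p}. \]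
   Context: $z_A=\prod_{k\in A}z_k$ for $A\subseteq[n]=\{1,\dots,n\}$. $\Pi_{k,m}$ is the set of ordered $m$-tuples $\pi=(B_1,\ldots,B_m)$ of $k$-element subsets of $[n]$ whose union is $[n]$. For $\pi=(B_1,\dots,B_m)\in\Pi_{k,m}$, $L_\pi:(\mathbb{C}^n)^m\to X$ is the $m$-linear map $L_\pi(z^{(1)},\ldots,z^{(m)})=\sum_{i_1\in B_1}\cdots\sum_{i_m\in B_m}x_{\{i_1,\ldots,i_m\}}z^{(1)}_{i_1}\cdots z^{(m)}_{i_m}$. A random variable is symmetric if it has the same distribution as its negative. *)

theory Defs
  imports "HOL-Probability.Probability"
begin

text \<open>A complex Banach space: a real Banach space 'x together with a complex scalar
  multiplication sc extending the real one and making the norm complex-homogeneous.\<close>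
definition complex_scaling :: "(complex \<Rightarrow> 'x::real_normed_vector \<Rightarrow> 'x) \<Rightarrow> bool" where
  "complex_scaling sc \<longleftrightarrow>
     (\<forall>a b v. sc (a * b) v = sc a (sc b v)) \<and>
     (\<forall>a b v. sc (a + b) v = sc a v + sc b v) \<and>
     (\<forall>a v w. sc a (v + w) = sc a v + sc a w) \<and>
     (\<forall>r v. sc (complex_of_real r) v = r *\<^sub>R v) \<and>
     (\<forall>a v. norm (sc a v) = cmod a * norm v)"

definition zA :: "(nat \<Rightarrow> complex) \<Rightarrow> nat set \<Rightarrow> complex" where
  "zA z A = (\<Prod>k\<in>A. z k)"

definition tetra_poly :: "(complex \<Rightarrow> 'x \<Rightarrow> 'x::real_normed_vector) \<Rightarrow> nat \<Rightarrow> nat \<Rightarrow> (nat set \<Rightarrow> 'x) \<Rightarrow> (nat \<Rightarrow> complex) \<Rightarrow> 'x" where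
  "tetra_poly sc n m x z = (\<Sum>A\<in>{A. A \<subseteq> {1..n} \<and> card A = m}. sc (zA z A) (x A))"

text \<open>Pi_{k,m}: ordered m-tuples (B_1,...,B_m), encoded as extensional functions on {1..m},
  of k-element subsets of [n] whose union is [n].\<close>
definition Pi_km :: "nat \<Rightarrow> nat \<Rightarrow> nat \<Rightarrow> (nat \<Rightarrow> nat set) set" where
  "Pi_km n k m = {B \<in> {1..m} \<rightarrow>\<^sub>E Pow {1..n}. (\<forall>j\<in>{1..m}. card (B j) = k) \<and> (\<Union>j\<in>{1..m}. B j) = {1..n}}"

text \<open>L_pi(z^(1),...,z^(m)) = sum_{i_1 in B_1} ... sum_{i_m in B_m} x_{i_1,...,i_m} z^(1)_{i_1} ... z^(m)_{i_m};
  the tuple (i_1,...,i_m) is encoded as an extensional function i on {1..m}.\<close>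
definition L_pi :: "(complex \<Rightarrow> 'x \<Rightarrow> 'x::real_normed_vector) \<Rightarrow> nat \<Rightarrow> (nat set \<Rightarrow> 'x) \<Rightarrow> (nat \<Rightarrow> nat set)
    \<Rightarrow> (nat \<Rightarrow> nat \<Rightarrow> complex) \<Rightarrow> 'x" where
  "L_pi sc m x B z = (\<Sum>i\<in>(\<Pi>\<^sub>E j\<in>{1..m}. B j). sc (\<Prod>j\<in>{1..m}. z j (i j)) (x (i ` {1..m})))"

definition moment_norm :: "'a measure \<Rightarrow> ('a \<Rightarrow> 'x::real_normed_vector) \<Rightarrow> real \<Rightarrow> ennreal" where
  "moment_norm M f p =
     (let I = (\<integral>\<^sup>+ \<omega>. ennreal (norm (f \<omega>) powr p) \<partial>M)
      in if I = \<infinity> then \<infinity> else ennreal (enn2real I powr (1 / p)))"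

definition symmetric_rv :: "'a measure \<Rightarrow> ('a \<Rightarrow> complex) \<Rightarrow> bool" where
  "symmetric_rv M X \<longleftrightarrow> distr M borel X = distr M borel (\<lambda>\<omega>. - X \<omega>)"

end

theory Submission
  imports Defs
begin

text \<open>
  For an ordered partition pi = (B_1, ..., B_m) of [n] into blocks of size k, let P_pi be the part
  of P consisting of the monomials x_A z_A for which A meets every block exactly once (A is a
  transversal of pi). Feeding each coordinate i with the copy belonging to its block turns
  L_pi(xi^(1), ..., xi^(m)) into a random vector with the law of P_pi(xi), since the copies are
  independent and distributed like xi.

  Lower bound: P_pi(z) is the average over signs eps in {-1, 1}^m of
  (prod_j eps_j) P(eps_(block of i) z_i), and flipping signs block by block does not change the
  law of the independent symmetric vector xi. Minkowski's inequality gives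
  ||P_pi(xi)||_p <= ||P(xi)||_p.

  Upper bound: by symmetry every m-set is a transversal of the same number c of partitions, so
  the sum of all P_pi is c P, and double counting gives c (n choose m) = |Pi_{k,m}| k^m. With
  (k m choose m) <= e^m k^m and Minkowski's inequality this yields the factor e^m / |Pi_{k,m}|.
\<close>

section \<open>Moments\<close>

text \<open>Convexity of x powr p at u / a and v / b with weights a / (a + b) and b / (a + b):
  the pointwise core of Minkowski's inequality.\<close>
lemma powr_add_le_weighted:
  fixes u v a b p :: real
  assumes "0 \<le> u" "0 \<le> v" "0 < a" "0 < b" "1 \<le> p"
  shows "(u + v) powr p \<le> (a + b) powr (p - 1) * (u powr p / a powr (p - 1) + v powr p / b powr (p - 1))"
proof -
  have grow: "w powr p \<le> (a + b) powr (p - 1) * (w powr p / c powr (p - 1))"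
    if "0 < c" "c \<le> a + b" for w c
  proof -
    have "c powr (p - 1) \<le> (a + b) powr (p - 1)"
      using that assms by (intro powr_mono2) auto
    then show ?thesis
      using that by (simp add: field_simps mult_left_mono)
  qed
  consider "u = 0" | "v = 0" | "0 < u" "0 < v"
    using assms by linarith
  then show ?thesis
  proof cases
    case 1
    then show ?thesis using grow[of b v] assms by simp
  next
    case 2
    then show ?thesis using grow[of a u] assms by simp
  next
    case 3
    define t where "t = b / (a + b)"
    have t: "0 \<le> t" "t \<le> 1" "1 - t = a / (a + b)"
      using assms by (auto simp: t_def field_simps)
    have weight: "(a + b) powr p * (c / (a + b) * (w / c) powr p) = (a + b) powr (p - 1) * (w powr p / c powr (p - 1))"
      if "0 < c" "0 \<le> w" for c w
      using that assms by (simp add: powr_divide powr_diff field_simps)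
    have mid: "(1 - t) * (u / a) + t * (v / b) = (u + v) / (a + b)"
      unfolding t(3) unfolding t_def using assms by (simp add: add_divide_distrib)
    have "(u + v) powr p = (a + b) powr p * ((1 - t) * (u / a) + t * (v / b)) powr p"
      unfolding mid using assms 3 by (subst powr_divide) auto
    also have "\<dots> \<le> (a + b) powr p * ((1 - t) * (u / a) powr p + t * (v / b) powr p)"
      using convex_onD[OF powr_convex[OF assms(5)], of t "u / a" "v / b"] t 3 assms by simp
    also have "\<dots> = (a + b) powr (p - 1) * (u powr p / a powr (p - 1) + v powr p / b powr (p - 1))"
      unfolding t(3) unfolding t_def distrib_left weight[OF assms(3,1)] weight[OF assms(4,2)] ..
    finally show ?thesis .
  qed
qed

lemma moment_norm_le_ennreal_iff:
  assumes "0 < p" "0 \<le> c"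
  shows "moment_norm M f p \<le> ennreal c \<longleftrightarrow>
         (\<integral>\<^sup>+ \<omega>. ennreal (norm (f \<omega>) powr p) \<partial>M) \<le> ennreal (c powr p)"
proof (cases "\<integral>\<^sup>+ \<omega>. ennreal (norm (f \<omega>) powr p) \<partial>M" rule: ennreal_cases)
  case (real A)
  have "A powr (1 / p) \<le> c \<longleftrightarrow> A \<le> c powr p"
  proof
    assume "A powr (1 / p) \<le> c"
    then have "(A powr (1 / p)) powr p \<le> c powr p"
      using assms by (intro powr_mono2) auto
    then show "A \<le> c powr p"
      using real assms by (simp add: powr_powr)
  next
    assume "A \<le> c powr p"
    then have "A powr (1 / p) \<le> (c powr p) powr (1 / p)"
      using real assms by (intro powr_mono2) auto
    then show "A powr (1 / p) \<le> c"
      using assms by (simp add: powr_powr)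
  qed
  then show ?thesis
    using real assms by (simp add: moment_norm_def)
qed (simp add: moment_norm_def top_unique)

lemma nn_integral_norm_powr_eq:
  assumes "0 < p" "moment_norm M f p = ennreal c" "0 \<le> c"
  shows "(\<integral>\<^sup>+ \<omega>. ennreal (norm (f \<omega>) powr p) \<partial>M) = ennreal (c powr p)"
proof (cases "\<integral>\<^sup>+ \<omega>. ennreal (norm (f \<omega>) powr p) \<partial>M" rule: ennreal_cases)
  case (real A)
  then have "c = A powr (1 / p)"
    using assms by (simp add: moment_norm_def)
  then show ?thesis
    using real assms by (simp add: powr_powr)
qed (use assms in \<open>simp add: moment_norm_def\<close>)

lemma moment_norm_mono:
  assumes "0 < p" "AE \<omega> in M. norm (f \<omega>) \<le> norm (g \<omega>)"
  shows "moment_norm M f p \<le> moment_norm M g p"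
proof (cases "moment_norm M g p" rule: ennreal_cases)
  case (real c)
  have "(\<integral>\<^sup>+ \<omega>. ennreal (norm (f \<omega>) powr p) \<partial>M) \<le> (\<integral>\<^sup>+ \<omega>. ennreal (norm (g \<omega>) powr p) \<partial>M)"
    using assms(2) by (intro nn_integral_mono_AE) (auto elim!: eventually_mono intro: powr_mono2 simp: less_imp_le[OF assms(1)])
  also have "\<dots> = ennreal (c powr p)"
    using real assms by (intro nn_integral_norm_powr_eq) auto
  finally show ?thesis
    using real assms by (simp add: moment_norm_le_ennreal_iff)
qed simp

lemma moment_norm_zero: "0 < p \<Longrightarrow> moment_norm M (\<lambda>\<omega>. 0) p = 0"
  by (simp add: moment_norm_def)

lemma moment_norm_scaleR:
  assumes "(\<lambda>\<omega>. norm (f \<omega>)) \<in> borel_measurable M" "0 < p"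
  shows "moment_norm M (\<lambda>\<omega>. c *\<^sub>R f \<omega>) p = ennreal \<bar>c\<bar> * moment_norm M f p"
proof (cases "c = 0")
  case True
  then show ?thesis using assms by (simp add: moment_norm_zero)
next
  case False
  have "(\<integral>\<^sup>+ \<omega>. ennreal (norm (c *\<^sub>R f \<omega>) powr p) \<partial>M)
      = ennreal (\<bar>c\<bar> powr p) * (\<integral>\<^sup>+ \<omega>. ennreal (norm (f \<omega>) powr p) \<partial>M)"
    using assms by (simp add: powr_mult ennreal_mult nn_integral_cmult)
  then show ?thesis
    using False assms
    by (cases "\<integral>\<^sup>+ \<omega>. ennreal (norm (f \<omega>) powr p) \<partial>M" rule: ennreal_cases)
       (simp_all add: moment_norm_def ennreal_mult_top ennreal_mult[symmetric] powr_mult powr_powr)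
qed

lemma moment_norm_distr:
  assumes "distr M N U = distr M N V" "U \<in> measurable M N" "V \<in> measurable M N"
    "(\<lambda>z. norm (F z)) \<in> borel_measurable N"
  shows "moment_norm M (\<lambda>\<omega>. F (U \<omega>)) p = moment_norm M (\<lambda>\<omega>. F (V \<omega>)) p"
proof -
  define h where "h z = ennreal (norm (F z) powr p)" for z
  have "h \<in> borel_measurable N"
    using assms(4) unfolding h_def by measurable
  then have "(\<integral>\<^sup>+ \<omega>. h (U \<omega>) \<partial>M) = (\<integral>\<^sup>+ \<omega>. h (V \<omega>) \<partial>M)"
    using assms(1-3) by (simp add: nn_integral_distr[symmetric])
  then show ?thesis
    by (simp add: moment_norm_def h_def)
qed

lemma moment_norm_add_le_if_moment_norm_eq_0:
  assumes "(\<lambda>\<omega>. norm (f \<omega>)) \<in> borel_measurable M" "0 < p" "moment_norm M f p = 0"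
  shows "moment_norm M (\<lambda>\<omega>. f \<omega> + g \<omega>) p \<le> moment_norm M g p"
proof (rule moment_norm_mono[OF assms(2)])
  have "(\<integral>\<^sup>+ \<omega>. ennreal (norm (f \<omega>) powr p) \<partial>M) = 0"
    using nn_integral_norm_powr_eq[of p M f 0] assms by simp
  then have "AE \<omega> in M. ennreal (norm (f \<omega>) powr p) = 0"
    using assms(1) by (subst (asm) nn_integral_0_iff_AE) auto
  then show "AE \<omega> in M. norm (f \<omega> + g \<omega>) \<le> norm (g \<omega>)"
    by eventually_elim simp
qed

lemma nn_integral_norm_add_powr_le:
  assumes f: "(\<lambda>\<omega>. norm (f \<omega>)) \<in> borel_measurable M" and g: "(\<lambda>\<omega>. norm (g \<omega>)) \<in> borel_measurable M"
    and p: "1 \<le> p" and ab: "0 < a" "0 < b"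
    and If: "(\<integral>\<^sup>+ \<omega>. ennreal (norm (f \<omega>) powr p) \<partial>M) = ennreal (a powr p)"
    and Ig: "(\<integral>\<^sup>+ \<omega>. ennreal (norm (g \<omega>) powr p) \<partial>M) = ennreal (b powr p)"
  shows "(\<integral>\<^sup>+ \<omega>. ennreal (norm (f \<omega> + g \<omega>) powr p) \<partial>M) \<le> ennreal ((a + b) powr p)"
proof -
  define C where "C = (a + b) powr (p - 1)"
  have "0 \<le> C"
    by (simp add: C_def)
  have "(\<integral>\<^sup>+ \<omega>. ennreal (norm (f \<omega> + g \<omega>) powr p) \<partial>M)
      \<le> (\<integral>\<^sup>+ \<omega>. ennreal (C / a powr (p - 1)) * ennreal (norm (f \<omega>) powr p)
             + ennreal (C / b powr (p - 1)) * ennreal (norm (g \<omega>) powr p) \<partial>M)"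
  proof (intro nn_integral_mono)
    fix \<omega>
    have "norm (f \<omega> + g \<omega>) powr p \<le> (norm (f \<omega>) + norm (g \<omega>)) powr p"
      using p by (intro powr_mono2 norm_triangle_ineq) auto
    also have "\<dots> \<le> C / a powr (p - 1) * norm (f \<omega>) powr p + C / b powr (p - 1) * norm (g \<omega>) powr p"
      using powr_add_le_weighted[of "norm (f \<omega>)" "norm (g \<omega>)" a b p] ab p
      by (simp add: C_def field_simps)
    finally show "ennreal (norm (f \<omega> + g \<omega>) powr p)
        \<le> ennreal (C / a powr (p - 1)) * ennreal (norm (f \<omega>) powr p)
          + ennreal (C / b powr (p - 1)) * ennreal (norm (g \<omega>) powr p)"
      using ab by (simp add: C_def ennreal_mult'[symmetric] ennreal_plus[symmetric] del: ennreal_plus)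
  qed
  also have "\<dots> = ennreal (C / a powr (p - 1)) * ennreal (a powr p) + ennreal (C / b powr (p - 1)) * ennreal (b powr p)"
    using f g If Ig by (simp add: nn_integral_add nn_integral_cmult)
  also have "\<dots> = ennreal (C * a + C * b)"
    using ab \<open>0 \<le> C\<close> by (simp add: ennreal_mult'[symmetric] ennreal_plus[symmetric] powr_diff del: ennreal_plus)
  also have "C * a + C * b = (a + b) powr p"
    unfolding distrib_left[symmetric] C_def using ab by (simp add: powr_diff)
  finally show ?thesis .
qed

lemma moment_norm_add:
  assumes f: "(\<lambda>\<omega>. norm (f \<omega>)) \<in> borel_measurable M"
    and g: "(\<lambda>\<omega>. norm (g \<omega>)) \<in> borel_measurable M" and p: "1 \<le> p"
  shows "moment_norm M (\<lambda>\<omega>. f \<omega> + g \<omega>) p \<le> moment_norm M f p + moment_norm M g p"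
proof (cases "moment_norm M f p" rule: ennreal_cases)
  case (real a)
  note a = this
  show ?thesis
  proof (cases "moment_norm M g p" rule: ennreal_cases)
    case (real b)
    note b = this
    consider "a = 0" | "b = 0" | "0 < a" "0 < b"
      using a b by linarith
    then show ?thesis
    proof cases
      case 1
      then have "moment_norm M (\<lambda>\<omega>. f \<omega> + g \<omega>) p \<le> moment_norm M g p"
        using a p by (intro moment_norm_add_le_if_moment_norm_eq_0[OF f]) auto
      then show ?thesis
        by (rule order_trans) (simp add: add_increasing)
    next
      case 2
      then have "moment_norm M (\<lambda>\<omega>. g \<omega> + f \<omega>) p \<le> moment_norm M f p"
        using b p by (intro moment_norm_add_le_if_moment_norm_eq_0[OF g]) auto
      then show ?thesis
        by (simp add: add.commute add_increasing2 order_trans)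
    next
      case 3
      have "moment_norm M (\<lambda>\<omega>. f \<omega> + g \<omega>) p \<le> ennreal (a + b)"
        using 3 a b f g p
        by (subst moment_norm_le_ennreal_iff) (auto intro!: nn_integral_norm_add_powr_le nn_integral_norm_powr_eq)
      then show ?thesis
        using a b by simp
    qed
  qed simp
qed simp

text \<open>X need not be separable, so a sum of Borel measurable X-valued maps need not be Borel
  measurable. Finite sums of measurable scalar functions times fixed vectors have measurable
  norms and are closed under all operations used below.\<close>
definition finite_rank_measurable :: "'a measure \<Rightarrow> ('a \<Rightarrow> 'x::real_normed_vector) \<Rightarrow> bool" where
  "finite_rank_measurable M f \<longleftrightarrow>
     (\<exists>(N::nat) r v. (\<forall>i. r i \<in> borel_measurable M) \<and> (\<forall>\<omega>. f \<omega> = (\<Sum>i<N. r i \<omega> *\<^sub>R v i)))"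

lemma finite_rank_measurable_norm:
  assumes "finite_rank_measurable M f"
  shows "(\<lambda>\<omega>. norm (f \<omega>)) \<in> borel_measurable M"
proof -
  obtain N :: nat and r v where r: "\<And>i. r i \<in> borel_measurable M" and f: "\<And>\<omega>. f \<omega> = (\<Sum>i<N. r i \<omega> *\<^sub>R v i)"
    using assms unfolding finite_rank_measurable_def by blast
  have coeffs: "(\<lambda>\<omega> i. r i \<omega>) \<in> borel_measurable M"
    by (rule measurable_coordinatewise_then_product) (use r in auto)
  have "continuous_on UNIV (\<lambda>y. norm (\<Sum>i<N. y i *\<^sub>R v i))"
    by (intro continuous_intros continuous_on_product_coordinates)
  then have "(\<lambda>y. norm (\<Sum>i<N. y i *\<^sub>R v i)) \<in> borel_measurable borel"
    by (rule borel_measurable_continuous_onI)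
  from measurable_comp[OF coeffs this] show ?thesis
    by (simp add: f comp_def)
qed

lemma finite_rank_measurable_zero: "finite_rank_measurable M (\<lambda>\<omega>. 0)"
  unfolding finite_rank_measurable_def by (intro exI[of _ 0] exI[of _ "\<lambda>_ _. 0"]) auto

lemma finite_rank_measurable_scaleR_const:
  "r \<in> borel_measurable M \<Longrightarrow> finite_rank_measurable M (\<lambda>\<omega>. r \<omega> *\<^sub>R v)"
  unfolding finite_rank_measurable_def by (intro exI[of _ 1] exI[of _ "\<lambda>_. r"] exI[of _ "\<lambda>_. v"]) auto

lemma finite_rank_measurable_add:
  assumes "finite_rank_measurable M f" "finite_rank_measurable M g"
  shows "finite_rank_measurable M (\<lambda>\<omega>. f \<omega> + g \<omega>)"
proof -
  obtain N :: nat and r v where r: "\<And>i. r i \<in> borel_measurable M" and f: "\<And>\<omega>. f \<omega> = (\<Sum>i<N. r i \<omega> *\<^sub>R v i)"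
    using assms(1) unfolding finite_rank_measurable_def by blast
  obtain K :: nat and s w where s: "\<And>i. s i \<in> borel_measurable M" and g: "\<And>\<omega>. g \<omega> = (\<Sum>i<K. s i \<omega> *\<^sub>R w i)"
    using assms(2) unfolding finite_rank_measurable_def by blast
  define r' where "r' i = (if i < N then r i else s (i - N))" for i
  define v' where "v' i = (if i < N then v i else w (i - N))" for i
  have split: "(\<Sum>i<N + L. h i) = (\<Sum>i<N. h i) + (\<Sum>i<L. h (N + i))" for L and h :: "nat \<Rightarrow> 'z::comm_monoid_add"
    by (induction L) (simp_all add: add.assoc)
  have "f \<omega> + g \<omega> = (\<Sum>i<N + K. r' i \<omega> *\<^sub>R v' i)" for \<omega>
    by (simp add: split f g r'_def v'_def)
  moreover have "r' i \<in> borel_measurable M" for i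
    using r s by (simp add: r'_def)
  ultimately show ?thesis
    unfolding finite_rank_measurable_def by blast
qed

lemma finite_rank_measurable_sum:
  "(\<And>i. i \<in> I \<Longrightarrow> finite_rank_measurable M (f i)) \<Longrightarrow> finite_rank_measurable M (\<lambda>\<omega>. \<Sum>i\<in>I. f i \<omega>)"
  by (induction I rule: infinite_finite_induct)
     (auto intro: finite_rank_measurable_zero finite_rank_measurable_add)

lemma finite_rank_measurable_scaleR:
  assumes "finite_rank_measurable M f" "c \<in> borel_measurable M"
  shows "finite_rank_measurable M (\<lambda>\<omega>. c \<omega> *\<^sub>R f \<omega>)"
proof -
  obtain N :: nat and r v where r: "\<And>i. r i \<in> borel_measurable M" and f: "\<And>\<omega>. f \<omega> = (\<Sum>i<N. r i \<omega> *\<^sub>R v i)"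
    using assms(1) unfolding finite_rank_measurable_def by blast
  have "c \<omega> *\<^sub>R f \<omega> = (\<Sum>i<N. (c \<omega> * r i \<omega>) *\<^sub>R v i)" for \<omega>
    by (simp add: f scaleR_sum_right)
  moreover have "(\<lambda>\<omega>. c \<omega> * r i \<omega>) \<in> borel_measurable M" for i
    using r assms(2) by measurable
  ultimately show ?thesis
    unfolding finite_rank_measurable_def by (intro exI[of _ N] exI[of _ "\<lambda>i \<omega>. c \<omega> * r i \<omega>"]) auto
qed

lemma moment_norm_sum:
  assumes "\<And>i. i \<in> I \<Longrightarrow> finite_rank_measurable M (f i)" "1 \<le> p"
  shows "moment_norm M (\<lambda>\<omega>. \<Sum>i\<in>I. f i \<omega>) p \<le> (\<Sum>i\<in>I. moment_norm M (f i) p)"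
  using assms(1)
proof (induction I rule: infinite_finite_induct)
  case (insert i I)
  have "moment_norm M (\<lambda>\<omega>. f i \<omega> + (\<Sum>i\<in>I. f i \<omega>)) p
      \<le> moment_norm M (f i) p + moment_norm M (\<lambda>\<omega>. \<Sum>i\<in>I. f i \<omega>) p"
    using insert assms(2)
    by (intro moment_norm_add finite_rank_measurable_norm finite_rank_measurable_sum) auto
  also have "\<dots> \<le> moment_norm M (f i) p + (\<Sum>i\<in>I. moment_norm M (f i) p)"
    using insert by (intro add_left_mono) auto
  finally show ?case
    using insert by simp
qed (use assms(2) in \<open>simp_all add: moment_norm_zero\<close>)

section \<open>Partitions into blocks and their transversals\<close>

definition block_of :: "(nat \<Rightarrow> nat set) \<Rightarrow> nat \<Rightarrow> nat \<Rightarrow> nat" where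
  "block_of B m i = (THE j. j \<in> {1..m} \<and> i \<in> B j)"

definition transversals :: "nat \<Rightarrow> (nat \<Rightarrow> nat set) \<Rightarrow> nat set set" where
  "transversals m B = (\<lambda>f. f ` {1..m}) ` (\<Pi>\<^sub>E j\<in>{1..m}. B j)"

lemma finite_Pi_km: "finite (Pi_km n k m)"
proof (rule finite_subset)
  show "Pi_km n k m \<subseteq> {1..m} \<rightarrow>\<^sub>E Pow {1..n}"
    unfolding Pi_km_def by blast
qed (intro finite_PiE; simp)

lemma Pi_kmD:
  assumes "B \<in> Pi_km n k m"
  shows "\<And>j. j \<in> {1..m} \<Longrightarrow> B j \<subseteq> {1..n}" "\<And>j. j \<in> {1..m} \<Longrightarrow> card (B j) = k"
    "(\<Union>j\<in>{1..m}. B j) = {1..n}" "B \<in> extensional {1..m}"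
  using assms unfolding Pi_km_def by (auto simp: PiE_iff)

text \<open>Otherwise the m blocks of size k would cover fewer than k m points.\<close>
lemma Pi_km_disjoint:
  assumes B: "B \<in> Pi_km n k m" and n: "n = k * m"
    and a: "a \<in> {1..m}" and b: "b \<in> {1..m}" and "a \<noteq> b"
  shows "B a \<inter> B b = {}"
proof (rule ccontr)
  assume "B a \<inter> B b \<noteq> {}"
  then obtain y where y: "y \<in> B a" "y \<in> B b" by auto
  note D = Pi_kmD[OF B]
  have fin: "finite (B a)"
    using D(1)[OF a] finite_subset by blast
  have "{1..n} = (\<Union>j\<in>{1..m}-{a}. B j) \<union> (B a - {y})"
    using D(3) y b \<open>a \<noteq> b\<close> a by blast
  then have "n \<le> card (\<Union>j\<in>{1..m}-{a}. B j) + card (B a - {y})"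
    by (metis card_Un_le card_atLeastAtMost diff_Suc_1)
  also have "\<dots> \<le> (\<Sum>j\<in>{1..m}-{a}. card (B j)) + card (B a - {y})"
    by (intro add_right_mono card_UN_le) auto
  also have "\<dots> = k * (m - 1) + (k - 1)"
    using D(2) a y fin by simp
  finally have "n \<le> k * (m - 1) + (k - 1)" .
  moreover have "k \<noteq> 0"
    using D(2)[OF a] y fin by (metis card_0_eq empty_iff)
  moreover have "m \<noteq> 0"
    using a by auto
  ultimately show False
    using n by (cases k; cases m) auto
qed

context
  fixes B :: "nat \<Rightarrow> nat set" and n k m :: nat
  assumes B: "B \<in> Pi_km n k m" and n: "n = k * m"
begin

lemma block_unique: "j \<in> {1..m} \<Longrightarrow> j' \<in> {1..m} \<Longrightarrow> i \<in> B j \<Longrightarrow> i \<in> B j' \<Longrightarrow> j = j'"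
  using Pi_km_disjoint[OF B n, of j j'] by blast

lemma block_of_eq: "j \<in> {1..m} \<Longrightarrow> i \<in> B j \<Longrightarrow> block_of B m i = j"
  unfolding block_of_def using block_unique by blast

lemma block_of_mem:
  assumes "i \<in> {1..n}"
  shows "block_of B m i \<in> {1..m}" "i \<in> B (block_of B m i)"
proof -
  obtain j where "j \<in> {1..m}" "i \<in> B j"
    using Pi_kmD(3)[OF B] assms by blast
  then show "block_of B m i \<in> {1..m}" "i \<in> B (block_of B m i)"
    using block_of_eq by simp_all
qed

lemma inj_on_PiE_blocks:
  assumes "f \<in> (\<Pi>\<^sub>E j\<in>{1..m}. B j)"
  shows "inj_on f {1..m}"
  using assms Pi_km_disjoint[OF B n] by (intro inj_onI) (fastforce simp: PiE_iff)

lemma inj_on_image_PiE_blocks: "inj_on (\<lambda>f. f ` {1..m}) (\<Pi>\<^sub>E j\<in>{1..m}. B j)"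
proof (rule inj_onI)
  fix f g assume f: "f \<in> (\<Pi>\<^sub>E j\<in>{1..m}. B j)" and g: "g \<in> (\<Pi>\<^sub>E j\<in>{1..m}. B j)"
    and eq: "f ` {1..m} = g ` {1..m}"
  show "f = g"
  proof (rule PiE_ext[OF f g])
    fix j assume j: "j \<in> {1..m}"
    then obtain j' where j': "j' \<in> {1..m}" "f j = g j'"
      using eq by (metis imageE imageI)
    then have "j = j'"
      using f g j Pi_km_disjoint[OF B n, of j j'] by (fastforce simp: PiE_iff)
    then show "f j = g j"
      using j' by simp
  qed
qed

lemma transversals_subset:
  assumes "A \<in> transversals m B"
  shows "A \<subseteq> {1..n}" "card A = m"
proof -
  obtain f where f: "f \<in> (\<Pi>\<^sub>E j\<in>{1..m}. B j)" "A = f ` {1..m}"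
    using assms unfolding transversals_def by blast
  then show "A \<subseteq> {1..n}"
    using Pi_kmD(1)[OF B] unfolding PiE_iff by blast
  show "card A = m"
    using f inj_on_PiE_blocks by (simp add: card_image)
qed

lemma card_transversals: "card (transversals m B) = k ^ m"
proof -
  have "card (transversals m B) = card (\<Pi>\<^sub>E j\<in>{1..m}. B j)"
    unfolding transversals_def by (rule card_image[OF inj_on_image_PiE_blocks])
  also have "\<dots> = (\<Prod>j\<in>{1..m}. card (B j))"
    by (simp add: card_PiE)
  also have "\<dots> = k ^ m"
    using Pi_kmD(2)[OF B] by simp
  finally show ?thesis .
qed

lemma card_eq_sum_card_Int_blocks:
  assumes "A \<subseteq> {1..n}"
  shows "card A = (\<Sum>j\<in>{1..m}. card (A \<inter> B j))"
proof -
  have "A = (\<Union>j\<in>{1..m}. A \<inter> B j)"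
    using assms Pi_kmD(3)[OF B] by blast
  moreover have "card (\<Union>j\<in>{1..m}. A \<inter> B j) = (\<Sum>j\<in>{1..m}. card (A \<inter> B j))"
    using assms block_unique by (intro card_UN_disjoint) (auto intro: finite_subset)
  ultimately show ?thesis by simp
qed

lemma transversals_iff_card_Int_eq_1:
  assumes "A \<subseteq> {1..n}"
  shows "A \<in> transversals m B \<longleftrightarrow> (\<forall>j\<in>{1..m}. card (A \<inter> B j) = 1)"
proof
  assume "A \<in> transversals m B"
  then obtain f where f: "f \<in> (\<Pi>\<^sub>E j\<in>{1..m}. B j)" "A = f ` {1..m}"
    unfolding transversals_def by blast
  have "A \<inter> B j = {f j}" if "j \<in> {1..m}" for j
    using f that Pi_km_disjoint[OF B n] by (fastforce simp: PiE_iff)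
  then show "\<forall>j\<in>{1..m}. card (A \<inter> B j) = 1"
    by simp
next
  assume one: "\<forall>j\<in>{1..m}. card (A \<inter> B j) = 1"
  define f where "f = (\<lambda>j\<in>{1..m}. THE a. A \<inter> B j = {a})"
  have f: "A \<inter> B j = {f j}" if j: "j \<in> {1..m}" for j
  proof -
    obtain a where "A \<inter> B j = {a}"
      using one j by (force simp: card_1_singleton_iff)
    then show ?thesis
      using j by (simp add: f_def)
  qed
  have "f \<in> extensional {1..m}"
    by (simp add: f_def)
  with f have "f \<in> (\<Pi>\<^sub>E j\<in>{1..m}. B j)"
    unfolding PiE_iff by blast
  moreover have "f ` {1..m} = A"
  proof
    show "f ` {1..m} \<subseteq> A"
      using f by blast
    show "A \<subseteq> f ` {1..m}"
    proof
      fix a assume "a \<in> A"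
      then have "a \<in> A \<inter> B (block_of B m a)" "block_of B m a \<in> {1..m}"
        using assms block_of_mem by auto
      then show "a \<in> f ` {1..m}"
        using f by blast
    qed
  qed
  ultimately show "A \<in> transversals m B"
    unfolding transversals_def by blast
qed

lemma transversals_iff_odd_card_Int:
  assumes "A \<subseteq> {1..n}" "card A = m"
  shows "A \<in> transversals m B \<longleftrightarrow> (\<forall>j\<in>{1..m}. odd (card (A \<inter> B j)))"
proof -
  have "card (A \<inter> B j) = 1" if odd: "\<forall>j\<in>{1..m}. odd (card (A \<inter> B j))" and j: "j \<in> {1..m}" for j
  proof (rule ccontr)
    assume "card (A \<inter> B j) \<noteq> 1"
    then have "1 < card (A \<inter> B j)"
      using odd j odd_pos by fastforce
    then have "(\<Sum>j\<in>{1..m}. 1) < (\<Sum>j\<in>{1..m}. card (A \<inter> B j))"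
      using odd j by (intro sum_strict_mono_ex1) (auto simp: Suc_le_eq odd_pos)
    then show False
      using card_eq_sum_card_Int_blocks assms by simp
  qed
  then show ?thesis
    using transversals_iff_card_Int_eq_1[OF assms(1)] by fastforce
qed

end

lemma Pi_km_image_bij:
  assumes \<sigma>: "bij_betw \<sigma> {1..n} {1..n}" and B: "B \<in> Pi_km n k m"
  shows "(\<lambda>j\<in>{1..m}. \<sigma> ` B j) \<in> Pi_km n k m"
proof -
  note D = Pi_kmD[OF B]
  have "inj_on \<sigma> (B j)" if "j \<in> {1..m}" for j
    using \<sigma> D(1)[OF that] by (meson bij_betw_def inj_on_subset)
  then have "card (\<sigma> ` B j) = k" if "j \<in> {1..m}" for j
    using D(2) that by (simp add: card_image)
  moreover have "(\<Union>j\<in>{1..m}. \<sigma> ` B j) = {1..n}"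
    using D(3) \<sigma> by (simp add: bij_betw_def flip: image_UN)
  moreover have "\<sigma> ` B j \<subseteq> {1..n}" if "j \<in> {1..m}" for j
    using D(1)[OF that] \<sigma> by (auto simp: bij_betw_def)
  ultimately show ?thesis
    unfolding Pi_km_def by auto
qed

lemma transversals_image:
  assumes "A \<in> transversals m B"
  shows "\<sigma> ` A \<in> transversals m (\<lambda>j\<in>{1..m}. \<sigma> ` B j)"
proof -
  obtain f where f: "f \<in> (\<Pi>\<^sub>E j\<in>{1..m}. B j)" "A = f ` {1..m}"
    using assms unfolding transversals_def by blast
  then have "(\<lambda>j\<in>{1..m}. \<sigma> (f j)) \<in> (\<Pi>\<^sub>E j\<in>{1..m}. (\<lambda>j\<in>{1..m}. \<sigma> ` B j) j)"
    by (auto simp: PiE_iff)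
  moreover have "(\<lambda>j\<in>{1..m}. \<sigma> (f j)) ` {1..m} = \<sigma> ` A"
    using f by auto
  ultimately show ?thesis
    unfolding transversals_def by (metis image_eqI)
qed

lemma ex_bij_betw_image_eq:
  assumes "finite S" "A \<subseteq> S" "A' \<subseteq> S" "card A = card A'"
  obtains \<sigma> where "bij_betw \<sigma> S S" "\<sigma> ` A = A'"
proof -
  have fin: "finite A" "finite A'"
    using assms finite_subset by auto
  obtain f where f: "bij_betw f A A'"
    using finite_same_card_bij[OF fin assms(4)] by blast
  have "card (S - A) = card (S - A')"
    using assms fin by (simp add: card_Diff_subset)
  then obtain g where g: "bij_betw g (S - A) (S - A')"
    using finite_same_card_bij[of "S - A" "S - A'"] assms(1) by blast
  define \<sigma> where "\<sigma> x = (if x \<in> A then f x else g x)" for x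
  have \<sigma>A: "bij_betw \<sigma> A A'"
    using f by (rule bij_betw_cong[THEN iffD1, rotated]) (simp add: \<sigma>_def)
  have "bij_betw \<sigma> (S - A) (S - A')"
    using g by (rule bij_betw_cong[THEN iffD1, rotated]) (simp add: \<sigma>_def)
  with \<sigma>A have "bij_betw \<sigma> (A \<union> (S - A)) (A' \<union> (S - A'))"
    by (rule bij_betw_combine) blast
  moreover have "A \<union> (S - A) = S" "A' \<union> (S - A') = S"
    using assms by auto
  ultimately show ?thesis
    using that \<sigma>A by (simp add: bij_betw_def)
qed

definition transversal_count :: "nat \<Rightarrow> nat \<Rightarrow> nat \<Rightarrow> nat set \<Rightarrow> nat" where
  "transversal_count n k m A = card {B \<in> Pi_km n k m. A \<in> transversals m B}"

lemma transversal_count_le: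
  assumes "A \<subseteq> {1..n}" "A' \<subseteq> {1..n}" "card A = card A'"
  shows "transversal_count n k m A \<le> transversal_count n k m A'"
proof -
  obtain \<sigma> where \<sigma>: "bij_betw \<sigma> {1..n} {1..n}" "\<sigma> ` A = A'"
    using ex_bij_betw_image_eq[of "{1..n}" A A'] assms by auto
  define relabel where "relabel B = (\<lambda>j\<in>{1..m}. \<sigma> ` B j)" for B :: "nat \<Rightarrow> nat set"
  have "inj_on relabel (Pi_km n k m)"
  proof (rule inj_onI)
    fix B B' assume B: "B \<in> Pi_km n k m" and B': "B' \<in> Pi_km n k m" and eq: "relabel B = relabel B'"
    show "B = B'"
    proof (rule extensionalityI[OF Pi_kmD(4)[OF B] Pi_kmD(4)[OF B']])
      fix j assume j: "j \<in> {1..m}"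
      then have "\<sigma> ` B j = \<sigma> ` B' j"
        using fun_cong[OF eq, of j] by (simp add: relabel_def)
      then show "B j = B' j"
        using inj_on_image_eq_iff[OF bij_betw_imp_inj_on[OF \<sigma>(1)] Pi_kmD(1)[OF B j] Pi_kmD(1)[OF B' j]]
        by simp
    qed
  qed
  moreover have "relabel ` {B \<in> Pi_km n k m. A \<in> transversals m B} \<subseteq> {B \<in> Pi_km n k m. A' \<in> transversals m B}"
    using \<sigma> Pi_km_image_bij transversals_image by (fastforce simp: relabel_def)
  ultimately show ?thesis
    unfolding transversal_count_def
    by (intro card_inj_on_le) (auto intro: inj_on_subset finite_subset[OF _ finite_Pi_km])
qed

lemma sum_transversal_count:
  assumes n: "n = k * m"
  shows "(\<Sum>A\<in>{A. A \<subseteq> {1..n} \<and> card A = m}. transversal_count n k m A) = card (Pi_km n k m) * k ^ m"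
proof -
  let ?S = "{A. A \<subseteq> {1..n} \<and> card A = m}"
  have "finite ?S"
    by (rule finite_subset[of _ "Pow {1..n}"]) auto
  have "(\<Sum>A\<in>?S. transversal_count n k m A) = (\<Sum>A\<in>?S. \<Sum>B\<in>Pi_km n k m. of_bool (A \<in> transversals m B))"
    by (simp add: transversal_count_def finite_Pi_km Int_def)
  also have "\<dots> = (\<Sum>B\<in>Pi_km n k m. card {A \<in> ?S. A \<in> transversals m B})"
    using \<open>finite ?S\<close> by (subst sum.swap) (simp add: Int_def)
  also have "\<dots> = (\<Sum>B\<in>Pi_km n k m. k ^ m)"
  proof (rule sum.cong[OF refl])
    fix B assume B: "B \<in> Pi_km n k m"
    then have "{A \<in> ?S. A \<in> transversals m B} = transversals m B"
      using transversals_subset[OF B n] by auto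
    then show "card {A \<in> ?S. A \<in> transversals m B} = k ^ m"
      by (simp add: card_transversals[OF B n])
  qed
  finally show ?thesis
    by simp
qed

text \<open>Double counting of the pairs (A, B) with A a transversal of B, using that the count
  is the same for all m-sets A.\<close>
lemma transversal_count_mult_choose:
  assumes n: "n = k * m" and A: "A \<subseteq> {1..n}" "card A = m"
  shows "(n choose m) * transversal_count n k m A = card (Pi_km n k m) * k ^ m"
proof -
  let ?S = "{A. A \<subseteq> {1..n} \<and> card A = m}"
  have "transversal_count n k m A' = transversal_count n k m A" if "A' \<in> ?S" for A'
    using that A by (intro antisym transversal_count_le) auto
  then have "(\<Sum>A'\<in>?S. transversal_count n k m A') = card ?S * transversal_count n k m A"
    by simp
  moreover have "card ?S = n choose m"
    using n_subsets[of "{1..n}" m] by simp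
  ultimately show ?thesis
    using sum_transversal_count[OF n] by simp
qed

lemma power_div_fact_le_exp:
  fixes x :: real
  assumes "0 \<le> x"
  shows "x ^ n / fact n \<le> exp x"
proof -
  have "(\<Sum>i\<in>{n}. x ^ i /\<^sub>R fact i) \<le> (\<Sum>i. x ^ i /\<^sub>R fact i)"
    using assms summable_exp_generic[of x] by (intro sum_le_suminf) auto
  then show ?thesis
    by (simp add: exp_def divide_inverse mult.commute)
qed

lemma choose_le_exp_mult_power: "real ((k * m) choose m) \<le> exp (real m) * real k ^ m"
proof -
  have "real (((k * m) choose m) * fact m) \<le> real ((k * m) ^ m)"
    using binomial_fact_pow by (simp only: of_nat_le_iff)
  then have "real ((k * m) choose m) * fact m \<le> real k ^ m * real m ^ m"
    by (simp add: power_mult_distrib)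
  also have "\<dots> \<le> real k ^ m * (exp (real m) * fact m)"
    using power_div_fact_le_exp[of "real m" m] by (intro mult_left_mono) (simp_all add: divide_le_eq)
  finally show ?thesis
    by (simp add: mult_ac)
qed

lemma Pi_km_nonempty: "Pi_km (k * m) k m \<noteq> {}"
proof -
  define B where "B = (\<lambda>j\<in>{1..m}. {(j - 1) * k + 1..j * k})"
  have "B \<in> extensional {1..m}"
    by (simp add: B_def)
  moreover have "B j \<subseteq> {1..k * m}" if "j \<in> {1..m}" for j
    using that mult_le_mono1[of j m k] by (auto simp: B_def mult.commute)
  moreover have "card (B j) = k" if "j \<in> {1..m}" for j
    using that by (cases j) (auto simp: B_def)
  moreover have "{1..k * m} \<subseteq> (\<Union>j\<in>{1..m}. B j)"
  proof
    fix i assume i: "i \<in> {1..k * m}"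
    define q where "q = (i - 1) div k"
    have "0 < k"
      using i by (cases k) auto
    then have q: "q * k \<le> i - 1" "i - 1 < (q + 1) * k"
      unfolding q_def using div_times_less_eq_dividend dividend_less_div_times by auto
    have "q < m"
      unfolding q_def using i by (auto intro: less_mult_imp_div_less simp: mult.commute)
    then have "q + 1 \<in> {1..m}" "i \<in> B (q + 1)"
      using q i by (auto simp: B_def)
    then show "i \<in> (\<Union>j\<in>{1..m}. B j)"
      by blast
  qed
  ultimately have "B \<in> Pi_km (k * m) k m"
    unfolding Pi_km_def PiE_iff by blast
  then show ?thesis
    by blast
qed

lemma transversal_count_pos_and_card_Pi_km_le:
  assumes n: "n = k * m" and "m \<le> n"
  shows "0 < transversal_count n k m {1..m}"
    "real (card (Pi_km n k m)) \<le> exp (real m) * real (transversal_count n k m {1..m})"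
proof -
  let ?c = "transversal_count n k m {1..m}"
  have "0 < k ^ m"
    using assms by (cases "m = 0") auto
  moreover have "0 < card (Pi_km n k m)"
    using Pi_km_nonempty finite_Pi_km n by (simp add: card_gt_0_iff)
  moreover have choose: "(n choose m) * ?c = card (Pi_km n k m) * k ^ m"
    using assms by (intro transversal_count_mult_choose) auto
  ultimately show "0 < ?c"
    by (metis gr0I mult_0_right nat_0_less_mult_iff)
  have "real (card (Pi_km n k m)) * real k ^ m = real (n choose m) * real ?c"
    using choose by (metis of_nat_mult of_nat_power)
  also have "\<dots> \<le> exp (real m) * real k ^ m * real ?c"
    using choose_le_exp_mult_power[of k m] n by (intro mult_right_mono) auto
  finally show "real (card (Pi_km n k m)) \<le> exp (real m) * real ?c"
    using \<open>0 < k ^ m\<close> by (simp add: mult.commute mult.left_commute)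
qed

section \<open>The polynomial and its transversal parts\<close>

lemma complex_scaling_of_real_mult:
  "complex_scaling sc \<Longrightarrow> sc (complex_of_real r * a) v = r *\<^sub>R sc a v"
  unfolding complex_scaling_def by simp

lemma complex_scaling_Re_Im:
  assumes "complex_scaling sc"
  shows "sc a v = Re a *\<^sub>R v + Im a *\<^sub>R sc \<i> v"
proof -
  have add: "sc (b + c) v = sc b v + sc c v" for b c
    using assms unfolding complex_scaling_def by blast
  have of_real: "sc (complex_of_real r) v = r *\<^sub>R v" for r
    using assms unfolding complex_scaling_def by blast
  have "complex_of_real (Re a) + complex_of_real (Im a) * \<i> = a"
    by (simp add: complex_eq_iff)
  then have "sc a v = sc (complex_of_real (Re a) + complex_of_real (Im a) * \<i>) v"
    by simp
  also have "\<dots> = Re a *\<^sub>R v + Im a *\<^sub>R sc \<i> v"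
    by (simp only: add of_real complex_scaling_of_real_mult[OF assms])
  finally show ?thesis .
qed

lemma finite_rank_measurable_complex_scaling:
  assumes "complex_scaling sc" "a \<in> borel_measurable M"
  shows "finite_rank_measurable M (\<lambda>\<omega>. sc (a \<omega>) v)"
proof -
  have "(\<lambda>\<omega>. sc (a \<omega>) v) = (\<lambda>\<omega>. Re (a \<omega>) *\<^sub>R v + Im (a \<omega>) *\<^sub>R sc \<i> v)"
    by (rule ext) (rule complex_scaling_Re_Im[OF assms(1)])
  then show ?thesis
    using assms(2) by (simp add: finite_rank_measurable_add finite_rank_measurable_scaleR_const)
qed

definition transversal_part :: "(complex \<Rightarrow> 'x \<Rightarrow> 'x::real_normed_vector) \<Rightarrow> nat \<Rightarrow> (nat set \<Rightarrow> 'x)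
    \<Rightarrow> (nat \<Rightarrow> nat set) \<Rightarrow> (nat \<Rightarrow> complex) \<Rightarrow> 'x" where
  "transversal_part sc m x B z = (\<Sum>A\<in>transversals m B. sc (zA z A) (x A))"

lemma zA_restrict: "A \<subseteq> I \<Longrightarrow> zA (restrict z I) A = zA z A"
  unfolding zA_def by (intro prod.cong) auto

lemma tetra_poly_restrict: "tetra_poly sc n m x (restrict z {1..n}) = tetra_poly sc n m x z"
  unfolding tetra_poly_def by (intro sum.cong refl) (simp add: zA_restrict)

lemma measurable_zA:
  "(\<And>i. i \<in> A \<Longrightarrow> (\<lambda>\<omega>. z \<omega> i) \<in> borel_measurable M) \<Longrightarrow> (\<lambda>\<omega>. zA (z \<omega>) A) \<in> borel_measurable M"
  unfolding zA_def by (rule borel_measurable_prod)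

lemma finite_rank_measurable_tetra_poly:
  assumes "complex_scaling sc" "\<And>i. i \<in> {1..n} \<Longrightarrow> (\<lambda>\<omega>. z \<omega> i) \<in> borel_measurable M"
  shows "finite_rank_measurable M (\<lambda>\<omega>. tetra_poly sc n m x (z \<omega>))"
  unfolding tetra_poly_def using assms
  by (intro finite_rank_measurable_sum finite_rank_measurable_complex_scaling measurable_zA) auto

context
  fixes B :: "nat \<Rightarrow> nat set" and n k m :: nat
  assumes B: "B \<in> Pi_km n k m" and n: "n = k * m"
begin

lemma transversal_part_restrict: "transversal_part sc m x B (restrict z {1..n}) = transversal_part sc m x B z"
  unfolding transversal_part_def
  by (intro sum.cong refl arg_cong2[where f = sc] zA_restrict transversals_subset[OF B n]) simp_all

lemma finite_rank_measurable_transversal_part: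
  assumes "complex_scaling sc" "\<And>i. i \<in> {1..n} \<Longrightarrow> (\<lambda>\<omega>. z \<omega> i) \<in> borel_measurable M"
  shows "finite_rank_measurable M (\<lambda>\<omega>. transversal_part sc m x B (z \<omega>))"
  unfolding transversal_part_def using assms transversals_subset(1)[OF B n]
  by (intro finite_rank_measurable_sum finite_rank_measurable_complex_scaling measurable_zA) blast+

lemma L_pi_eq_transversal_part: "L_pi sc m x B w = transversal_part sc m x B (\<lambda>i. w (block_of B m i) i)"
proof -
  have "transversal_part sc m x B (\<lambda>i. w (block_of B m i) i)
      = (\<Sum>f\<in>(\<Pi>\<^sub>E j\<in>{1..m}. B j). sc (zA (\<lambda>i. w (block_of B m i) i) (f ` {1..m})) (x (f ` {1..m})))"
    unfolding transversal_part_def transversals_def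
    by (rule sum.reindex[OF inj_on_image_PiE_blocks[OF B n], unfolded comp_def])
  also have "\<dots> = L_pi sc m x B w"
    unfolding L_pi_def
  proof (intro sum.cong refl arg_cong2[where f = sc])
    fix f assume f: "f \<in> (\<Pi>\<^sub>E j\<in>{1..m}. B j)"
    have "zA (\<lambda>i. w (block_of B m i) i) (f ` {1..m}) = (\<Prod>j\<in>{1..m}. w (block_of B m (f j)) (f j))"
      unfolding zA_def prod.reindex[OF inj_on_PiE_blocks[OF B n f]] by simp
    also have "\<dots> = (\<Prod>j\<in>{1..m}. w j (f j))"
      using f by (intro prod.cong refl) (simp add: block_of_eq[OF B n] PiE_iff)
    finally show "zA (\<lambda>i. w (block_of B m i) i) (f ` {1..m}) = (\<Prod>j\<in>{1..m}. w j (f j))" .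
  qed
  finally show ?thesis
    by simp
qed

lemma prod_block_of:
  assumes "A \<subseteq> {1..n}"
  shows "(\<Prod>i\<in>A. \<epsilon> (block_of B m i)) = (\<Prod>j\<in>{1..m}. \<epsilon> j ^ card (A \<inter> B j))"
proof -
  have "(\<Prod>i\<in>A. \<epsilon> (block_of B m i)) = (\<Prod>j\<in>{1..m}. \<Prod>i\<in>{i \<in> A. block_of B m i = j}. \<epsilon> (block_of B m i))"
  proof (rule prod.group[symmetric])
    show "finite A"
      using assms finite_subset by blast
    show "block_of B m ` A \<subseteq> {1..m}"
      using assms block_of_mem(1)[OF B n] by blast
  qed simp
  also have "\<dots> = (\<Prod>j\<in>{1..m}. \<Prod>i\<in>A \<inter> B j. \<epsilon> j)"
  proof (rule prod.cong[OF refl])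
    fix j assume j: "j \<in> {1..m}"
    have "{i \<in> A. block_of B m i = j} = A \<inter> B j"
      using assms block_of_mem(2)[OF B n] block_of_eq[OF B n j] by blast
    then show "(\<Prod>i\<in>{i \<in> A. block_of B m i = j}. \<epsilon> (block_of B m i)) = (\<Prod>i\<in>A \<inter> B j. \<epsilon> j)"
      by (simp add: block_of_eq[OF B n j])
  qed
  finally show ?thesis
    by simp
qed

text \<open>Averaging over random block signs kills every monomial that is not a transversal.\<close>
lemma sum_signs_prod_block_of:
  assumes A: "A \<subseteq> {1..n}" "card A = m"
  shows "(\<Sum>\<epsilon>\<in>(\<Pi>\<^sub>E j\<in>{1..m}. {-1, 1::real}). (\<Prod>j\<in>{1..m}. \<epsilon> j) * (\<Prod>i\<in>A. \<epsilon> (block_of B m i)))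
       = (if A \<in> transversals m B then 2 ^ m else 0)"
proof -
  have "(\<Sum>\<epsilon>\<in>(\<Pi>\<^sub>E j\<in>{1..m}. {-1, 1::real}). (\<Prod>j\<in>{1..m}. \<epsilon> j) * (\<Prod>i\<in>A. \<epsilon> (block_of B m i)))
      = (\<Sum>\<epsilon>\<in>(\<Pi>\<^sub>E j\<in>{1..m}. {-1, 1::real}). \<Prod>j\<in>{1..m}. \<epsilon> j ^ Suc (card (A \<inter> B j)))"
    by (simp add: prod_block_of[OF A(1)] prod.distrib[symmetric])
  also have "\<dots> = (\<Prod>j\<in>{1..m}. \<Sum>e\<in>{-1, 1::real}. e ^ Suc (card (A \<inter> B j)))"
    by (rule prod_sum_PiE[symmetric]) auto
  also have "\<dots> = (\<Prod>j\<in>{1..m}. if odd (card (A \<inter> B j)) then 2 else 0)"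
    by (intro prod.cong refl) auto
  also have "\<dots> = (if A \<in> transversals m B then 2 ^ m else 0)"
  proof (cases "A \<in> transversals m B")
    case True
    then show ?thesis
      using transversals_iff_odd_card_Int[OF B n A] by simp
  next
    case False
    then obtain j where "j \<in> {1..m}" "even (card (A \<inter> B j))"
      using transversals_iff_odd_card_Int[OF B n A] by blast
    then show ?thesis
      using False by (auto simp: prod_zero_iff)
  qed
  finally show ?thesis .
qed

lemma sum_signs_tetra_poly:
  assumes sc: "complex_scaling sc"
  shows "(\<Sum>\<epsilon>\<in>(\<Pi>\<^sub>E j\<in>{1..m}. {-1, 1::real}). (\<Prod>j\<in>{1..m}. \<epsilon> j) *\<^sub>R
            tetra_poly sc n m x (\<lambda>i. complex_of_real (\<epsilon> (block_of B m i)) * z i))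
       = (2 ^ m :: real) *\<^sub>R transversal_part sc m x B z"
proof -
  let ?E = "\<Pi>\<^sub>E j\<in>{1..m}. {-1, 1::real}"
  let ?S = "{A. A \<subseteq> {1..n} \<and> card A = m}"
  have "finite ?S"
    by (rule finite_subset[of _ "Pow {1..n}"]) auto
  have zA_signs: "zA (\<lambda>i. complex_of_real (\<epsilon> (block_of B m i)) * z i) A
      = complex_of_real (\<Prod>i\<in>A. \<epsilon> (block_of B m i)) * zA z A" for \<epsilon> A
    unfolding zA_def by (simp add: prod.distrib)
  have "(\<Sum>\<epsilon>\<in>?E. (\<Prod>j\<in>{1..m}. \<epsilon> j) *\<^sub>R tetra_poly sc n m x (\<lambda>i. complex_of_real (\<epsilon> (block_of B m i)) * z i))
      = (\<Sum>\<epsilon>\<in>?E. \<Sum>A\<in>?S. ((\<Prod>j\<in>{1..m}. \<epsilon> j) * (\<Prod>i\<in>A. \<epsilon> (block_of B m i))) *\<^sub>R sc (zA z A) (x A))"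
    unfolding tetra_poly_def scaleR_sum_right
    by (intro sum.cong refl) (simp only: zA_signs complex_scaling_of_real_mult[OF sc] scaleR_scaleR)
  also have "\<dots> = (\<Sum>A\<in>?S. (\<Sum>\<epsilon>\<in>?E. (\<Prod>j\<in>{1..m}. \<epsilon> j) * (\<Prod>i\<in>A. \<epsilon> (block_of B m i))) *\<^sub>R sc (zA z A) (x A))"
    unfolding scaleR_sum_left by (rule sum.swap)
  also have "\<dots> = (\<Sum>A\<in>?S. if A \<in> transversals m B then (2 ^ m :: real) *\<^sub>R sc (zA z A) (x A) else 0)"
  proof (intro sum.cong refl)
    fix A assume "A \<in> ?S"
    then show "(\<Sum>\<epsilon>\<in>?E. (\<Prod>j\<in>{1..m}. \<epsilon> j) * (\<Prod>i\<in>A. \<epsilon> (block_of B m i))) *\<^sub>R sc (zA z A) (x A)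
        = (if A \<in> transversals m B then (2 ^ m :: real) *\<^sub>R sc (zA z A) (x A) else 0)"
      by (subst sum_signs_prod_block_of) auto
  qed
  also have "\<dots> = (\<Sum>A\<in>{A \<in> ?S. A \<in> transversals m B}. (2 ^ m :: real) *\<^sub>R sc (zA z A) (x A))"
    by (rule sum.inter_filter[OF \<open>finite ?S\<close>, symmetric])
  also have "{A \<in> ?S. A \<in> transversals m B} = transversals m B"
    using transversals_subset[OF B n] by blast
  also have "(\<Sum>A\<in>transversals m B. (2 ^ m :: real) *\<^sub>R sc (zA z A) (x A)) = (2 ^ m :: real) *\<^sub>R transversal_part sc m x B z"
    by (simp add: transversal_part_def scaleR_sum_right)
  finally show ?thesis .
qed

end

lemma sum_transversal_part:
  assumes n: "n = k * m"
  shows "(\<Sum>B\<in>Pi_km n k m. transversal_part sc m x B z)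
       = (\<Sum>A\<in>{A. A \<subseteq> {1..n} \<and> card A = m}. real (transversal_count n k m A) *\<^sub>R sc (zA z A) (x A))"
proof -
  let ?S = "{A. A \<subseteq> {1..n} \<and> card A = m}"
  have "finite ?S"
    by (rule finite_subset[of _ "Pow {1..n}"]) auto
  have part: "transversal_part sc m x B z = (\<Sum>A\<in>?S. if A \<in> transversals m B then sc (zA z A) (x A) else 0)"
    if B: "B \<in> Pi_km n k m" for B
  proof -
    have "{A \<in> ?S. A \<in> transversals m B} = transversals m B"
      using transversals_subset[OF B n] by blast
    then show ?thesis
      unfolding transversal_part_def sum.inter_filter[OF \<open>finite ?S\<close>, symmetric] by simp
  qed
  then have "(\<Sum>B\<in>Pi_km n k m. transversal_part sc m x B z)
      = (\<Sum>B\<in>Pi_km n k m. \<Sum>A\<in>?S. if A \<in> transversals m B then sc (zA z A) (x A) else 0)"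
    by (rule sum.cong[OF refl])
  also have "\<dots> = (\<Sum>A\<in>?S. \<Sum>B\<in>Pi_km n k m. if A \<in> transversals m B then sc (zA z A) (x A) else 0)"
    by (rule sum.swap)
  also have "\<dots> = (\<Sum>A\<in>?S. real (transversal_count n k m A) *\<^sub>R sc (zA z A) (x A))"
    unfolding transversal_count_def
    by (simp add: sum.inter_filter[OF finite_Pi_km, symmetric] sum_constant_scaleR)
  finally show ?thesis .
qed

lemma sum_transversal_part_eq_scaleR_tetra_poly:
  assumes n: "n = k * m" and "m \<le> n"
  shows "(\<Sum>B\<in>Pi_km n k m. transversal_part sc m x B z)
       = real (transversal_count n k m {1..m}) *\<^sub>R tetra_poly sc n m x z"
proof -
  have "transversal_count n k m A = transversal_count n k m {1..m}" if "A \<subseteq> {1..n}" "card A = m" for A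
    using that assms by (intro antisym transversal_count_le) auto
  then show ?thesis
    unfolding sum_transversal_part[OF n] tetra_poly_def scaleR_sum_right by simp
qed

section \<open>Sign flips and independent copies\<close>

lemma measurable_select_copies:
  assumes "\<And>i. i \<in> I \<Longrightarrow> b i \<in> J"
  shows "(\<lambda>y. \<lambda>i\<in>I. y (b i) i) \<in> measurable (PiM J (\<lambda>_. PiM I N)) (PiM I N)"
proof (rule measurable_restrict)
  fix i assume "i \<in> I"
  then show "(\<lambda>y. y (b i) i) \<in> measurable (PiM J (\<lambda>_. PiM I N)) (N i)"
    using assms by (intro measurable_compose[OF measurable_component_singleton[of "b i"] measurable_component_singleton])
qed

lemma (in product_prob_space) distr_PiM_select_copies:
  fixes J :: "'j set" and b :: "'i \<Rightarrow> 'j"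
  assumes I: "finite I" and J: "finite J" and b: "\<And>i. i \<in> I \<Longrightarrow> b i \<in> J"
  shows "distr (PiM J (\<lambda>_. PiM I M)) (PiM I M) (\<lambda>y. \<lambda>i\<in>I. y (b i) i) = PiM I M"
proof (rule PiM_eqI[OF I])
  let ?Q = "PiM I M"
  let ?g = "\<lambda>y. \<lambda>i\<in>I. y (b i) i"
  interpret Q: product_prob_space "\<lambda>_ :: 'j. ?Q" J
    by (intro product_prob_spaceI P.prob_space_axioms)
  have g: "?g \<in> measurable (PiM J (\<lambda>_. ?Q)) ?Q"
    using b by (rule measurable_select_copies)
  show "sets (distr (PiM J (\<lambda>_. ?Q)) ?Q ?g) = sets ?Q"
    by simp
  fix A assume A: "\<And>i. i \<in> I \<Longrightarrow> A i \<in> sets (M i)"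
  \<comment> \<open>the preimage of a box is a box: copy j constrains exactly the coordinates i with b i = j\<close>
  define C where "C j = (\<Pi>\<^sub>E i\<in>I. if b i = j then A i else space (M i))" for j
  have C: "C j \<in> sets ?Q" for j
    unfolding C_def using A I by (intro sets_PiM_I_finite) auto
  have "?g -` (\<Pi>\<^sub>E i\<in>I. A i) \<inter> space (PiM J (\<lambda>_. ?Q)) = (\<Pi>\<^sub>E j\<in>J. C j)"
    using b sets.sets_into_space[OF A] by (auto simp: C_def space_PiM PiE_iff split: if_splits) blast+
  then have "emeasure (distr (PiM J (\<lambda>_. ?Q)) ?Q ?g) (\<Pi>\<^sub>E i\<in>I. A i) = emeasure (PiM J (\<lambda>_. ?Q)) (\<Pi>\<^sub>E j\<in>J. C j)"
    using A I by (subst emeasure_distr[OF g]) (auto intro!: sets_PiM_I_finite)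
  also have "\<dots> = (\<Prod>j\<in>J. emeasure ?Q (C j))"
    using C J by (simp add: Q.emeasure_PiM)
  also have "\<dots> = (\<Prod>j\<in>J. \<Prod>i\<in>{i \<in> I. b i = j}. emeasure (M i) (A i))"
  proof (rule prod.cong[OF refl])
    fix j
    have "emeasure ?Q (C j) = (\<Prod>i\<in>I. if b i = j then emeasure (M i) (A i) else 1)"
      unfolding C_def using A I by (subst emeasure_PiM) (auto intro!: prod.cong simp: M.emeasure_space_1)
    also have "\<dots> = (\<Prod>i\<in>{i \<in> I. b i = j}. emeasure (M i) (A i))"
      using I by (simp add: prod.inter_filter)
    finally show "emeasure ?Q (C j) = (\<Prod>i\<in>{i \<in> I. b i = j}. emeasure (M i) (A i))" .
  qed
  also have "\<dots> = (\<Prod>i\<in>I. emeasure (M i) (A i))"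
    using b by (intro prod.group I J) auto
  finally show "emeasure (distr (PiM J (\<lambda>_. ?Q)) ?Q ?g) (\<Pi>\<^sub>E i\<in>I. A i) = (\<Prod>i\<in>I. emeasure (M i) (A i))" .
qed

lemma (in prob_space) distr_restrict_eq_PiM_if_indep_vars:
  assumes "indep_vars N X I" "I \<noteq> {}"
  shows "distr M (PiM I N) (\<lambda>\<omega>. \<lambda>i\<in>I. X i \<omega>) = PiM I (\<lambda>i. distr M (N i) (X i))"
proof -
  have "\<And>i. i \<in> I \<Longrightarrow> random_variable (N i) (X i)"
    using assms(1) by (simp add: indep_vars_def)
  from indep_vars_iff_distr_eq_PiM'[OF assms(2) this] assms(1) show ?thesis
    by simp
qed

lemma (in prob_space) distr_restrict_eq_if_indep_vars:
  assumes X: "indep_vars N X I" and Y: "indep_vars N Y I"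
    and marginals: "\<And>i. i \<in> I \<Longrightarrow> distr M (N i) (X i) = distr M (N i) (Y i)"
  shows "distr M (PiM I N) (\<lambda>\<omega>. \<lambda>i\<in>I. X i \<omega>) = distr M (PiM I N) (\<lambda>\<omega>. \<lambda>i\<in>I. Y i \<omega>)"
proof (cases "I = {}")
  case False
  have "distr M (PiM I N) (\<lambda>\<omega>. \<lambda>i\<in>I. X i \<omega>) = PiM I (\<lambda>i. distr M (N i) (X i))"
    using X False by (rule distr_restrict_eq_PiM_if_indep_vars)
  also have "\<dots> = PiM I (\<lambda>i. distr M (N i) (Y i))"
    using marginals by (rule PiM_cong[OF refl])
  also have "\<dots> = distr M (PiM I N) (\<lambda>\<omega>. \<lambda>i\<in>I. Y i \<omega>)"
    using Y False by (rule distr_restrict_eq_PiM_if_indep_vars[symmetric])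
  finally show ?thesis .
qed (simp add: restrict_def)

lemma (in prob_space) distr_restrict_sign_flip:
  assumes indep: "indep_vars (\<lambda>_. borel) \<xi> I" and symm: "\<And>i. i \<in> I \<Longrightarrow> symmetric_rv M (\<xi> i)"
    and s: "\<And>i. i \<in> I \<Longrightarrow> s i = 1 \<or> s i = -1"
  shows "distr M (PiM I (\<lambda>_. borel)) (\<lambda>\<omega>. \<lambda>i\<in>I. complex_of_real (s i) * \<xi> i \<omega>)
       = distr M (PiM I (\<lambda>_. borel)) (\<lambda>\<omega>. \<lambda>i\<in>I. \<xi> i \<omega>)"
proof (rule distr_restrict_eq_if_indep_vars[OF _ indep])
  show "indep_vars (\<lambda>_. borel) (\<lambda>i \<omega>. complex_of_real (s i) * \<xi> i \<omega>) I"
    using indep_vars_compose2[OF indep, of "\<lambda>i z. complex_of_real (s i) * z" "\<lambda>_. borel"] by simp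
  fix i assume "i \<in> I"
  then show "distr M borel (\<lambda>\<omega>. complex_of_real (s i) * \<xi> i \<omega>) = distr M borel (\<xi> i)"
    using s[of i] symm[of i] by (auto simp: symmetric_rv_def)
qed

lemma (in prob_space) distr_restrict_select_copies:
  fixes \<xi> :: "'i \<Rightarrow> 'a \<Rightarrow> 'b::topological_space" and \<eta> :: "'j \<Rightarrow> 'i \<Rightarrow> 'a \<Rightarrow> 'b" and b :: "'i \<Rightarrow> 'j"
  assumes indep: "indep_vars (\<lambda>_. borel) \<xi> I" and I: "finite I" and J: "finite J"
    and copies_indep: "indep_vars (\<lambda>_. PiM I (\<lambda>_. borel)) (\<lambda>j \<omega>. \<lambda>i\<in>I. \<eta> j i \<omega>) J"
    and copies_dist: "\<And>j. j \<in> J \<Longrightarrow> distr M (PiM I (\<lambda>_. borel)) (\<lambda>\<omega>. \<lambda>i\<in>I. \<eta> j i \<omega>)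
                                      = distr M (PiM I (\<lambda>_. borel)) (\<lambda>\<omega>. \<lambda>i\<in>I. \<xi> i \<omega>)"
    and b: "\<And>i. i \<in> I \<Longrightarrow> b i \<in> J"
  shows "distr M (PiM I (\<lambda>_. borel)) (\<lambda>\<omega>. \<lambda>i\<in>I. \<eta> (b i) i \<omega>)
       = distr M (PiM I (\<lambda>_. borel)) (\<lambda>\<omega>. \<lambda>i\<in>I. \<xi> i \<omega>)"
proof (cases "I = {}")
  case False
  let ?B = "PiM I (\<lambda>_. borel :: 'b measure)"
  define \<mu> where "\<mu> i = (if i \<in> I then distr M borel (\<xi> i) else return borel undefined)" for i
  interpret \<mu>: product_prob_space \<mu> I
  proof (intro product_prob_spaceI)
    show "prob_space (\<mu> i)" for i
      using indep by (cases "i \<in> I") (simp_all add: \<mu>_def indep_vars_def prob_space_distr prob_space_return)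
  qed
  have "distr M ?B (\<lambda>\<omega>. \<lambda>i\<in>I. \<xi> i \<omega>) = PiM I (\<lambda>i. distr M borel (\<xi> i))"
    using indep False by (rule distr_restrict_eq_PiM_if_indep_vars)
  also have "\<dots> = PiM I \<mu>"
    by (rule PiM_cong) (simp_all add: \<mu>_def)
  finally have \<xi>: "distr M ?B (\<lambda>\<omega>. \<lambda>i\<in>I. \<xi> i \<omega>) = PiM I \<mu>" .
  define Y where "Y \<omega> = (\<lambda>j\<in>J. \<lambda>i\<in>I. \<eta> j i \<omega>)" for \<omega>
  have Y_meas: "Y \<in> measurable M (PiM J (\<lambda>_. ?B))"
    unfolding Y_def by (rule measurable_restrict) (use copies_indep in \<open>simp add: indep_vars_def\<close>)
  have "J \<noteq> {}"
    using False b by blast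
  with copies_indep have "distr M (PiM J (\<lambda>_. ?B)) Y = PiM J (\<lambda>j. distr M ?B (\<lambda>\<omega>. \<lambda>i\<in>I. \<eta> j i \<omega>))"
    unfolding Y_def by (rule distr_restrict_eq_PiM_if_indep_vars)
  also have "\<dots> = PiM J (\<lambda>_. PiM I \<mu>)"
    using copies_dist \<xi> by (intro PiM_cong) auto
  finally have Y: "distr M (PiM J (\<lambda>_. ?B)) Y = PiM J (\<lambda>_. PiM I \<mu>)" .
  define g where "g y = (\<lambda>i\<in>I. y (b i) i)" for y :: "'j \<Rightarrow> 'i \<Rightarrow> 'b"
  have g_meas: "g \<in> measurable (PiM J (\<lambda>_. ?B)) ?B"
    unfolding g_def using b by (rule measurable_select_copies)
  have "(\<lambda>\<omega>. \<lambda>i\<in>I. \<eta> (b i) i \<omega>) = g \<circ> Y"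
    using b by (simp add: g_def Y_def fun_eq_iff restrict_def)
  then have "distr M ?B (\<lambda>\<omega>. \<lambda>i\<in>I. \<eta> (b i) i \<omega>) = distr (PiM J (\<lambda>_. PiM I \<mu>)) ?B g"
    using distr_distr[OF g_meas Y_meas] Y by simp
  also have "\<dots> = distr (PiM J (\<lambda>_. PiM I \<mu>)) (PiM I \<mu>) g"
    by (intro distr_cong sets_PiM_cong) (simp_all add: \<mu>_def)
  also have "\<dots> = PiM I \<mu>"
    unfolding g_def using I J b by (rule \<mu>.distr_PiM_select_copies)
  finally show ?thesis
    using \<xi> by simp
qed (simp add: restrict_def)

section \<open>Decoupling\<close>

lemma (in prob_space) moment_L_pi_eq_moment_transversal_part:
  assumes sc: "complex_scaling sc" and B: "B \<in> Pi_km n k m" and n: "n = k * m"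
    and indep: "indep_vars (\<lambda>_. borel) \<xi> {1..n}"
    and copies_indep: "indep_vars (\<lambda>_. PiM {1..n} (\<lambda>_. borel)) (\<lambda>j \<omega>. \<lambda>i\<in>{1..n}. \<eta> j i \<omega>) {1..m}"
    and copies_dist: "\<And>j. j \<in> {1..m} \<Longrightarrow>
          distr M (PiM {1..n} (\<lambda>_. borel)) (\<lambda>\<omega>. \<lambda>i\<in>{1..n}. \<eta> j i \<omega>)
        = distr M (PiM {1..n} (\<lambda>_. borel)) (\<lambda>\<omega>. \<lambda>i\<in>{1..n}. \<xi> i \<omega>)"
  shows "moment_norm M (\<lambda>\<omega>. L_pi sc m x B (\<lambda>j i. \<eta> j i \<omega>)) p
       = moment_norm M (\<lambda>\<omega>. transversal_part sc m x B (\<lambda>i. \<xi> i \<omega>)) p"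
proof -
  let ?PB = "PiM {1..n} (\<lambda>_. borel :: complex measure)"
  let ?F = "transversal_part sc m x B"
  have \<eta>_meas: "(\<lambda>\<omega>. \<eta> j i \<omega>) \<in> borel_measurable M" if "j \<in> {1..m}" "i \<in> {1..n}" for j i
  proof -
    have "(\<lambda>\<omega>. \<lambda>i\<in>{1..n}. \<eta> j i \<omega>) \<in> measurable M ?PB"
      using copies_indep that(1) by (simp add: indep_vars_def)
    from measurable_compose[OF this measurable_component_singleton[OF that(2)]] show ?thesis
      using that(2) by simp
  qed
  have "L_pi sc m x B (\<lambda>j i. \<eta> j i \<omega>) = ?F (\<lambda>i\<in>{1..n}. \<eta> (block_of B m i) i \<omega>)" for \<omega>
    unfolding L_pi_eq_transversal_part[OF B n] transversal_part_restrict[OF B n] ..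
  moreover have "?F (\<lambda>i. \<xi> i \<omega>) = ?F (\<lambda>i\<in>{1..n}. \<xi> i \<omega>)" for \<omega>
    unfolding transversal_part_restrict[OF B n] ..
  moreover have "moment_norm M (\<lambda>\<omega>. ?F (\<lambda>i\<in>{1..n}. \<eta> (block_of B m i) i \<omega>)) p
      = moment_norm M (\<lambda>\<omega>. ?F (\<lambda>i\<in>{1..n}. \<xi> i \<omega>)) p"
  proof (rule moment_norm_distr[where F = ?F and N = ?PB])
    show "distr M ?PB (\<lambda>\<omega>. \<lambda>i\<in>{1..n}. \<eta> (block_of B m i) i \<omega>) = distr M ?PB (\<lambda>\<omega>. \<lambda>i\<in>{1..n}. \<xi> i \<omega>)"
      by (rule distr_restrict_select_copies[OF indep _ _ copies_indep copies_dist])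
         (simp_all only: finite_atLeastAtMost block_of_mem(1)[OF B n])
    show "(\<lambda>\<omega>. \<lambda>i\<in>{1..n}. \<eta> (block_of B m i) i \<omega>) \<in> measurable M ?PB"
      using \<eta>_meas block_of_mem(1)[OF B n] by (intro measurable_restrict) auto
    show "(\<lambda>\<omega>. \<lambda>i\<in>{1..n}. \<xi> i \<omega>) \<in> measurable M ?PB"
      using indep by (intro measurable_restrict) (simp add: indep_vars_def)
    show "(\<lambda>z. norm (?F z)) \<in> borel_measurable ?PB"
      using sc by (intro finite_rank_measurable_norm finite_rank_measurable_transversal_part[OF B n]) auto
  qed
  ultimately show ?thesis
    by simp
qed

lemma ennreal_average_le:
  fixes c :: ennreal
  assumes "\<And>a. a \<in> A \<Longrightarrow> f a \<le> c"
  shows "ennreal (1 / real (card A)) * (\<Sum>a\<in>A. f a) \<le> c"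
proof (cases "card A = 0")
  case False
  have "ennreal (1 / real (card A)) * (\<Sum>a\<in>A. f a) \<le> ennreal (1 / real (card A)) * (of_nat (card A) * c)"
    using sum_mono[of A f "\<lambda>_. c"] assms by (intro mult_left_mono) auto
  also have "\<dots> = c"
    using False by (simp add: ennreal_of_nat_eq_real_of_nat mult.assoc[symmetric] flip: ennreal_mult')
  finally show ?thesis .
qed simp

lemma (in prob_space) moment_tetra_poly_sign_flip:
  assumes sc: "complex_scaling sc" and indep: "indep_vars (\<lambda>_. borel) \<xi> {1..n}"
    and symm: "\<And>i. i \<in> {1..n} \<Longrightarrow> symmetric_rv M (\<xi> i)" and s: "\<And>i. i \<in> {1..n} \<Longrightarrow> s i = 1 \<or> s i = -1"
  shows "moment_norm M (\<lambda>\<omega>. tetra_poly sc n m x (\<lambda>i. complex_of_real (s i) * \<xi> i \<omega>)) p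
       = moment_norm M (\<lambda>\<omega>. tetra_poly sc n m x (\<lambda>i. \<xi> i \<omega>)) p"
proof -
  let ?PB = "PiM {1..n} (\<lambda>_. borel :: complex measure)"
  have \<xi>_meas: "\<And>i. i \<in> {1..n} \<Longrightarrow> random_variable borel (\<xi> i)"
    using indep by (simp add: indep_vars_def)
  have "moment_norm M (\<lambda>\<omega>. tetra_poly sc n m x (\<lambda>i\<in>{1..n}. complex_of_real (s i) * \<xi> i \<omega>)) p
      = moment_norm M (\<lambda>\<omega>. tetra_poly sc n m x (\<lambda>i\<in>{1..n}. \<xi> i \<omega>)) p"
  proof (rule moment_norm_distr[where F = "tetra_poly sc n m x" and N = ?PB])
    show "distr M ?PB (\<lambda>\<omega>. \<lambda>i\<in>{1..n}. complex_of_real (s i) * \<xi> i \<omega>) = distr M ?PB (\<lambda>\<omega>. \<lambda>i\<in>{1..n}. \<xi> i \<omega>)"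
      using indep symm s by (rule distr_restrict_sign_flip)
    show "(\<lambda>\<omega>. \<lambda>i\<in>{1..n}. complex_of_real (s i) * \<xi> i \<omega>) \<in> measurable M ?PB"
      using \<xi>_meas by (intro measurable_restrict) auto
    show "(\<lambda>\<omega>. \<lambda>i\<in>{1..n}. \<xi> i \<omega>) \<in> measurable M ?PB"
      using \<xi>_meas by (intro measurable_restrict) auto
    show "(\<lambda>z. norm (tetra_poly sc n m x z)) \<in> borel_measurable ?PB"
      using sc by (intro finite_rank_measurable_norm finite_rank_measurable_tetra_poly) auto
  qed
  then show ?thesis
    unfolding tetra_poly_restrict .
qed

lemma (in prob_space) moment_transversal_part_le_moment_tetra_poly:
  assumes sc: "complex_scaling sc" and B: "B \<in> Pi_km n k m" and n: "n = k * m"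
    and indep: "indep_vars (\<lambda>_. borel) \<xi> {1..n}" and symm: "\<And>i. i \<in> {1..n} \<Longrightarrow> symmetric_rv M (\<xi> i)"
    and p: "1 \<le> p"
  shows "moment_norm M (\<lambda>\<omega>. transversal_part sc m x B (\<lambda>i. \<xi> i \<omega>)) p
       \<le> moment_norm M (\<lambda>\<omega>. tetra_poly sc n m x (\<lambda>i. \<xi> i \<omega>)) p"
proof -
  let ?E = "\<Pi>\<^sub>E j\<in>{1..m}. {-1, 1::real}"
  define flipped where "flipped \<epsilon> \<omega> = (\<Prod>j\<in>{1..m}. \<epsilon> j) *\<^sub>R
      tetra_poly sc n m x (\<lambda>i. complex_of_real (\<epsilon> (block_of B m i)) * \<xi> i \<omega>)" for \<epsilon> \<omega>
  have \<xi>_meas: "\<And>i. i \<in> {1..n} \<Longrightarrow> random_variable borel (\<xi> i)"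
    using indep by (simp add: indep_vars_def)
  have flipped_meas: "finite_rank_measurable M (flipped \<epsilon>)" for \<epsilon>
    unfolding flipped_def using sc \<xi>_meas
    by (intro finite_rank_measurable_scaleR finite_rank_measurable_tetra_poly) auto
  have "card ?E = 2 ^ m"
    by (simp add: card_PiE numeral_2_eq_2)
  then have average: "transversal_part sc m x B (\<lambda>i. \<xi> i \<omega>) = (1 / real (card ?E)) *\<^sub>R (\<Sum>\<epsilon>\<in>?E. flipped \<epsilon> \<omega>)" for \<omega>
    unfolding flipped_def sum_signs_tetra_poly[OF B n sc] by simp
  have "moment_norm M (\<lambda>\<omega>. transversal_part sc m x B (\<lambda>i. \<xi> i \<omega>)) p
      = ennreal (1 / real (card ?E)) * moment_norm M (\<lambda>\<omega>. \<Sum>\<epsilon>\<in>?E. flipped \<epsilon> \<omega>) p"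
    unfolding average using flipped_meas p
    by (subst moment_norm_scaleR) (auto intro!: finite_rank_measurable_norm finite_rank_measurable_sum)
  also have "\<dots> \<le> ennreal (1 / real (card ?E)) * (\<Sum>\<epsilon>\<in>?E. moment_norm M (flipped \<epsilon>) p)"
    using flipped_meas p by (intro mult_left_mono moment_norm_sum) auto
  also have "\<dots> \<le> moment_norm M (\<lambda>\<omega>. tetra_poly sc n m x (\<lambda>i. \<xi> i \<omega>)) p"
  proof (rule ennreal_average_le)
    fix \<epsilon> assume \<epsilon>: "\<epsilon> \<in> ?E"
    have signs: "\<epsilon> (block_of B m i) = 1 \<or> \<epsilon> (block_of B m i) = -1" if "i \<in> {1..n}" for i
      using \<epsilon> block_of_mem(1)[OF B n that] by (auto simp: PiE_iff)
    have "\<bar>\<Prod>j\<in>{1..m}. \<epsilon> j\<bar> = 1"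
      using \<epsilon> by (auto simp: abs_prod PiE_iff intro!: prod.neutral)
    then have "moment_norm M (flipped \<epsilon>) p
        = moment_norm M (\<lambda>\<omega>. tetra_poly sc n m x (\<lambda>i. complex_of_real (\<epsilon> (block_of B m i)) * \<xi> i \<omega>)) p"
      unfolding flipped_def using sc \<xi>_meas p
      by (subst moment_norm_scaleR) (auto intro!: finite_rank_measurable_norm finite_rank_measurable_tetra_poly)
    also have "\<dots> = moment_norm M (\<lambda>\<omega>. tetra_poly sc n m x (\<lambda>i. \<xi> i \<omega>)) p"
      by (rule moment_tetra_poly_sign_flip[OF sc indep symm signs])
    finally show "moment_norm M (flipped \<epsilon>) p \<le> moment_norm M (\<lambda>\<omega>. tetra_poly sc n m x (\<lambda>i. \<xi> i \<omega>)) p"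
      by simp
  qed
  finally show ?thesis .
qed

lemma moment_tetra_poly_le_sum_moment_transversal_part:
  assumes sc: "complex_scaling sc" and n: "n = k * m"
    and \<xi>_meas: "\<And>i. i \<in> {1..n} \<Longrightarrow> \<xi> i \<in> borel_measurable M" and p: "1 \<le> p"
  shows "moment_norm M (\<lambda>\<omega>. tetra_poly sc n m x (\<lambda>i. \<xi> i \<omega>)) p
       \<le> ennreal (exp (real m) / real (card (Pi_km n k m))) *
         (\<Sum>B\<in>Pi_km n k m. moment_norm M (\<lambda>\<omega>. transversal_part sc m x B (\<lambda>i. \<xi> i \<omega>)) p)"
proof (cases "m \<le> n")
  case False
  then have "{A. A \<subseteq> {1..n} \<and> card A = m} = {}"
    using card_mono[of "{1..n}"] by fastforce
  then have "tetra_poly sc n m x z = 0" for z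
    unfolding tetra_poly_def by (metis sum.empty)
  then show ?thesis
    using p by (simp add: moment_norm_zero)
next
  case True
  define c where "c = transversal_count n k m {1..m}"
  have c: "0 < c" "1 / real c \<le> exp (real m) / real (card (Pi_km n k m))"
    using transversal_count_pos_and_card_Pi_km_le[OF n True] Pi_km_nonempty finite_Pi_km n
    by (auto simp: c_def field_simps card_gt_0_iff)
  have P: "tetra_poly sc n m x z = (1 / real c) *\<^sub>R (\<Sum>B\<in>Pi_km n k m. transversal_part sc m x B z)" for z
    using c by (simp add: sum_transversal_part_eq_scaleR_tetra_poly[OF n True] c_def)
  have parts: "finite_rank_measurable M (\<lambda>\<omega>. transversal_part sc m x B (\<lambda>i. \<xi> i \<omega>))" if "B \<in> Pi_km n k m" for B
    using sc \<xi>_meas by (intro finite_rank_measurable_transversal_part[OF that n])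
  have "moment_norm M (\<lambda>\<omega>. tetra_poly sc n m x (\<lambda>i. \<xi> i \<omega>)) p
      = ennreal (1 / real c) * moment_norm M (\<lambda>\<omega>. \<Sum>B\<in>Pi_km n k m. transversal_part sc m x B (\<lambda>i. \<xi> i \<omega>)) p"
    unfolding P using parts p
    by (subst moment_norm_scaleR) (auto intro!: finite_rank_measurable_norm finite_rank_measurable_sum)
  also have "\<dots> \<le> ennreal (1 / real c) * (\<Sum>B\<in>Pi_km n k m. moment_norm M (\<lambda>\<omega>. transversal_part sc m x B (\<lambda>i. \<xi> i \<omega>)) p)"
    using parts p by (intro mult_left_mono moment_norm_sum) auto
  also have "\<dots> \<le> ennreal (exp (real m) / real (card (Pi_km n k m))) *
      (\<Sum>B\<in>Pi_km n k m. moment_norm M (\<lambda>\<omega>. transversal_part sc m x B (\<lambda>i. \<xi> i \<omega>)) p)"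
    using c by (intro mult_right_mono ennreal_leI) auto
  finally show ?thesis .
qed

theorem proposition2p6:
  fixes M :: "'a measure"
    and x :: "nat set \<Rightarrow> 'x::banach"
    and sc :: "complex \<Rightarrow> 'x \<Rightarrow> 'x"
    and k m n :: nat
    and \<xi> :: "nat \<Rightarrow> 'a \<Rightarrow> complex"
    and \<eta> :: "nat \<Rightarrow> nat \<Rightarrow> 'a \<Rightarrow> complex"
    and p :: real
  assumes "complex_scaling sc"
    and "prob_space M"
    and "n = k * m"
    and indep: "prob_space.indep_vars M (\<lambda>_. borel) \<xi> {1..n}"
    and symm: "\<forall>i\<in>{1..n}. symmetric_rv M (\<xi> i)"
    and copies_indep: "prob_space.indep_vars M (\<lambda>_. PiM {1..n} (\<lambda>_. borel))
                         (\<lambda>j \<omega>. \<lambda>i\<in>{1..n}. \<eta> j i \<omega>) {1..m}"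
    and copies_dist: "\<forall>j\<in>{1..m}.
          distr M (PiM {1..n} (\<lambda>_. borel)) (\<lambda>\<omega>. \<lambda>i\<in>{1..n}. \<eta> j i \<omega>)
        = distr M (PiM {1..n} (\<lambda>_. borel)) (\<lambda>\<omega>. \<lambda>i\<in>{1..n}. \<xi> i \<omega>)"
    and "1 \<le> p"
  shows "ennreal (1 / real (card (Pi_km n k m))) *
           (\<Sum>\<pi>\<in>Pi_km n k m. moment_norm M (\<lambda>\<omega>. L_pi sc m x \<pi> (\<lambda>j i. \<eta> j i \<omega>)) p)
         \<le> moment_norm M (\<lambda>\<omega>. tetra_poly sc n m x (\<lambda>i. \<xi> i \<omega>)) p
       \<and> moment_norm M (\<lambda>\<omega>. tetra_poly sc n m x (\<lambda>i. \<xi> i \<omega>)) p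
         \<le> ennreal (exp (real m) / real (card (Pi_km n k m))) *
           (\<Sum>\<pi>\<in>Pi_km n k m. moment_norm M (\<lambda>\<omega>. L_pi sc m x \<pi> (\<lambda>j i. \<eta> j i \<omega>)) p)"
proof -
  interpret prob_space M by fact
  let ?Pi = "Pi_km n k m"
  let ?NP = "moment_norm M (\<lambda>\<omega>. tetra_poly sc n m x (\<lambda>i. \<xi> i \<omega>)) p"
  let ?NT = "\<lambda>\<pi>. moment_norm M (\<lambda>\<omega>. transversal_part sc m x \<pi> (\<lambda>i. \<xi> i \<omega>)) p"
  have NL: "moment_norm M (\<lambda>\<omega>. L_pi sc m x \<pi> (\<lambda>j i. \<eta> j i \<omega>)) p = ?NT \<pi>" if "\<pi> \<in> ?Pi" for \<pi>
    using assms that by (intro moment_L_pi_eq_moment_transversal_part) auto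
  have "ennreal (1 / real (card ?Pi)) * (\<Sum>\<pi>\<in>?Pi. ?NT \<pi>) \<le> ?NP"
    using assms by (intro ennreal_average_le moment_transversal_part_le_moment_tetra_poly) auto
  moreover have "?NP \<le> ennreal (exp (real m) / real (card ?Pi)) * (\<Sum>\<pi>\<in>?Pi. ?NT \<pi>)"
    using assms by (intro moment_tetra_poly_le_sum_moment_transversal_part) (auto simp: indep_vars_def)
  ultimately show ?thesis
    using NL by simp
qed

end
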